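(* Let $k=\mathbb{F}_q$ with $q>3$ odd, $A=M_{2n}(k)$, $V=k^{2n}$, $J_{2n}=\begin{pmatrix}0&I_n\\-I_n&0\end{pmatrix}$, $[x,y]=\langle x,yJ_{2n}\rangle$ with $\langle\cdot,\cdot\rangle$ the standard dot product, and $a^\sim=J_{2n}a^{t}J_{2n}^{-1}$. Let $M=V^2$ with $A$ acting by $(x,y)a=(xa,ya)$, $\psi$ a nontrivial character of $k^+$, $\chi((x,y),(v,z))=\psi([x,z]-[y,v])$, and $\gamma(u,(x,y))=\psi([xu,y])$ for $u\in A^s_{-,\sim}=\{u\in A\mid u^\sim=u\}$. Let $\mathcal{U}(\gamma,\chi)$ be the group of $A$-linear automorphisms $\beta$ of $M$ such that $\gamma(u,\beta(x,y))=\gamma(u,(x,y))$ for all $u,(x,y)$ and $\chi(\beta(x,y),\beta(v,z))=\chi((x,y),(v,z))$ for all $(x,y),(v,z)$. Then $\mathcal{U}(\gamma,\chi)\cong\mathrm{SL}_2(k)$. *)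

theory Defs
  imports "HOL-Analysis.Analysis" "HOL-Algebra.Group"
begin

text \<open>Row vectors in k^(2n) are indexed by the type 'n + 'n (first block Inl, second Inr).\<close>

definition Jmat :: "('a::ring_1)^('n::finite + 'n)^('n + 'n)" where
  "Jmat = (\<chi> i j. case (i, j) of
       (Inl a, Inr b) \<Rightarrow> (if a = b then 1 else 0)
     | (Inr a, Inl b) \<Rightarrow> (if a = b then -1 else 0)
     | _ \<Rightarrow> 0)"

definition dotp :: "('a::comm_ring_1)^'m \<Rightarrow> 'a^'m \<Rightarrow> 'a" where
  "dotp x y = (\<Sum>i\<in>UNIV. x $ i * y $ i)"

definition sympf :: "('a::comm_ring_1)^('n::finite + 'n) \<Rightarrow> 'a^('n + 'n) \<Rightarrow> 'a" where
  "sympf x y = dotp x (y v* Jmat)"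

definition tilde :: "('a::field)^('n::finite + 'n)^('n + 'n) \<Rightarrow> 'a^('n + 'n)^('n + 'n)" where
  "tilde a = Jmat ** transpose a ** matrix_inv Jmat"

definition Asym :: "(('a::field)^('n::finite + 'n)^('n + 'n)) set" where
  "Asym = {u. tilde u = u}"

type_synonym ('a, 'n) modM = "('a^('n + 'n)) \<times> ('a^('n + 'n))"

definition actM :: "(('a::comm_ring_1), 'n::finite) modM \<Rightarrow> 'a^('n + 'n)^('n + 'n) \<Rightarrow> ('a, 'n) modM" where
  "actM m a = (fst m v* a, snd m v* a)"

definition addM :: "(('a::comm_ring_1), 'n::finite) modM \<Rightarrow> ('a, 'n) modM \<Rightarrow> ('a, 'n) modM" where
  "addM m m' = (fst m + fst m', snd m + snd m')"

definition chiM :: "('a \<Rightarrow> complex) \<Rightarrow> (('a::comm_ring_1), 'n::finite) modM \<Rightarrow> ('a, 'n) modM \<Rightarrow> complex" where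
  "chiM psi m m' = psi (sympf (fst m) (snd m') - sympf (snd m) (fst m'))"

definition gammaM :: "('a \<Rightarrow> complex) \<Rightarrow> ('a::comm_ring_1)^('n::finite + 'n)^('n + 'n) \<Rightarrow> ('a, 'n) modM \<Rightarrow> complex" where
  "gammaM psi u m = psi (sympf (fst m v* u) (snd m))"

definition A_linear_aut :: "((('a::comm_ring_1), 'n::finite) modM \<Rightarrow> ('a, 'n) modM) \<Rightarrow> bool" where
  "A_linear_aut \<beta> \<longleftrightarrow> bij \<beta> \<and> (\<forall>m m'. \<beta> (addM m m') = addM (\<beta> m) (\<beta> m'))
     \<and> (\<forall>m a. \<beta> (actM m a) = actM (\<beta> m) a)"

definition U_set :: "('a \<Rightarrow> complex) \<Rightarrow> (((('a::field), 'n::finite) modM \<Rightarrow> ('a, 'n) modM)) set" where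
  "U_set psi = {\<beta>. A_linear_aut \<beta>
      \<and> (\<forall>u\<in>Asym. \<forall>m. gammaM psi u (\<beta> m) = gammaM psi u m)
      \<and> (\<forall>m m'. chiM psi (\<beta> m) (\<beta> m') = chiM psi m m')}"

definition U_group :: "('a \<Rightarrow> complex) \<Rightarrow> ((('a::field), 'n::finite) modM \<Rightarrow> ('a, 'n) modM) monoid" where
  "U_group psi = \<lparr>carrier = U_set psi, mult = (\<circ>), one = id\<rparr>"

definition SL2_group :: "(('a::field)^2^2) monoid" where
  "SL2_group = \<lparr>carrier = {m. det m = 1}, mult = (**), one = mat 1\<rparr>"

definition additive_character :: "('a::ab_group_add \<Rightarrow> complex) \<Rightarrow> bool" where
  "additive_character psi \<longleftrightarrow> (\<forall>a b. psi (a + b) = psi a * psi b) \<and> (\<forall>a. norm (psi a) = 1)"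

end

theory Submission
  imports Defs "HOL-Number_Theory.Residues"
begin

text \<open>
  \<open>M = V\<^sup>2\<close> is \<open>V \<otimes> k\<^sup>2\<close>, and \<open>V\<close> is the simple module of \<open>A = M\<^sub>2\<^sub>n(k)\<close> with
  \<open>End\<^sub>A(V) = k\<close>; so the \<open>A\<close>-linear automorphisms of \<open>M\<close> are exactly the maps
  \<open>(x, y) \<mapsto> (ax + by, cx + dy)\<close> for invertible \<open>g = (a b; c d)\<close>. Under such a map the form
  \<open>[x,z] - [y,v]\<close> underlying \<open>\<chi>\<close> is multiplied by \<open>det g\<close>; since \<open>[,]\<close> is onto \<open>k\<close> and
  \<open>\<psi>\<close> is nontrivial, \<open>\<chi>\<close>-invariance forces \<open>det g = 1\<close>. Conversely, \<open>a \<mapsto> a\<^sup>\<sim>\<close> is the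
  adjoint for \<open>[,]\<close>, so for \<open>u = u\<^sup>\<sim>\<close> the form \<open>(x, y) \<mapsto> [xu, y]\<close> is skew and, as \<open>2 \<noteq> 0\<close>,
  alternating; it too is multiplied by \<open>det g\<close>, so \<open>det g = 1\<close> also preserves \<open>\<gamma>\<close>.
\<close>

lemma matrix_mul_uminus_right: "(A :: 'a::comm_ring_1^'n::finite^'m) ** (- B) = - (A ** B)"
  by (simp add: vec_eq_iff matrix_matrix_mult_def sum_negf)

lemma matrix_mul_uminus_left: "(- A :: 'a::comm_ring_1^'n::finite^'m) ** B = - (A ** B)"
  by (simp add: vec_eq_iff matrix_matrix_mult_def sum_negf)

lemma matrix_inv_eqI:
  fixes A B :: "'a::semiring_1^'n::finite^'n"
  assumes "A ** B = mat 1" and "B ** A = mat 1"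
  shows "matrix_inv A = B"
proof -
  have inv: "A ** matrix_inv A = mat 1 \<and> matrix_inv A ** A = mat 1"
    unfolding matrix_inv_def by (rule someI[of _ B]) (use assms in blast)
  have "matrix_inv A = (B ** A) ** matrix_inv A" by (simp add: assms(2))
  also have "\<dots> = B" by (simp add: matrix_mul_assoc[symmetric] inv)
  finally show ?thesis .
qed

lemma sum_UNIV_Plus:
  fixes f :: "'a::finite + 'b::finite \<Rightarrow> 'c::comm_monoid_add"
  shows "sum f UNIV = (\<Sum>a\<in>UNIV. f (Inl a)) + (\<Sum>b\<in>UNIV. f (Inr b))"
proof -
  have "sum f UNIV = sum f (UNIV <+> UNIV)" by simp
  also have "\<dots> = (\<Sum>a\<in>UNIV. f (Inl a)) + (\<Sum>b\<in>UNIV. f (Inr b))" by (subst sum.Plus) auto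
  finally show ?thesis .
qed

lemma all_Plus: "(\<forall>i. P i) \<longleftrightarrow> (\<forall>a. P (Inl a)) \<and> (\<forall>b. P (Inr b))"
  by (metis sum.exhaust)

lemma Jmat_nth [simp]:
  "Jmat $ Inl a $ Inl b = 0" "Jmat $ Inr a $ Inr b = 0"
  "Jmat $ Inl a $ Inr b = (if a = b then 1 else 0)" "Jmat $ Inr a $ Inl b = (if a = b then -1 else 0)"
  by (simp_all add: Jmat_def)

lemma Jmat_mult_Jmat: "(Jmat :: 'a::comm_ring_1^('n::finite + 'n)^('n + 'n)) ** Jmat = - mat 1"
  by (simp add: vec_eq_iff matrix_matrix_mult_def mat_def all_Plus sum_UNIV_Plus if_distrib cong: if_cong)

lemma transpose_Jmat: "transpose (Jmat :: 'a::comm_ring_1^('n::finite + 'n)^('n + 'n)) = - Jmat"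
  by (simp add: vec_eq_iff transpose_def all_Plus)

lemma matrix_inv_Jmat: "matrix_inv (Jmat :: 'a::comm_ring_1^('n::finite + 'n)^('n + 'n)) = - Jmat"
  by (rule matrix_inv_eqI) (simp_all add: matrix_mul_uminus_left matrix_mul_uminus_right Jmat_mult_Jmat)

lemma dotp_vector_matrix_mult: "dotp (x v* A) y = dotp x (A *v y)"
  unfolding dotp_def vector_matrix_mult_def matrix_vector_mult_def
  by (simp add: sum_distrib_left sum_distrib_right mult_ac) (rule sum.swap)

lemma sympf_eq_dotp: "sympf x y = dotp x (- Jmat *v y)"
  by (simp add: sympf_def transpose_Jmat[symmetric])

lemma sympf_tilde: "sympf (x v* tilde a) y = sympf x (y v* a)"
proof -
  have "tilde a ** (- Jmat) = Jmat ** transpose a ** (Jmat ** Jmat)"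
    by (simp add: tilde_def matrix_inv_Jmat matrix_mul_assoc matrix_mul_uminus_left matrix_mul_uminus_right)
  also have "\<dots> = - Jmat ** transpose a"
    by (simp add: Jmat_mult_Jmat matrix_mul_uminus_left matrix_mul_uminus_right)
  finally have adjoint: "tilde a ** (- Jmat) = - Jmat ** transpose a" .
  have "sympf (x v* tilde a) y = dotp x ((tilde a ** (- Jmat)) *v y)"
    by (simp only: sympf_eq_dotp dotp_vector_matrix_mult matrix_vector_mul_assoc)
  also have "\<dots> = dotp x (- Jmat *v (transpose a *v y))"
    by (simp only: adjoint matrix_vector_mul_assoc)
  also have "\<dots> = sympf x (y v* a)"
    by (simp only: sympf_eq_dotp transpose_matrix_vector)
  finally show ?thesis .
qed

lemma sympf_explicit: "sympf x y = (\<Sum>a\<in>UNIV. x $ Inr a * y $ Inl a - x $ Inl a * y $ Inr a)"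
  by (simp add: sympf_def dotp_def vector_matrix_mult_def sum_UNIV_Plus if_distrib sum_subtractf
      sum.distrib sum_negf cong: if_cong)

lemma sympf_swap: "sympf y x = - sympf x y"
  by (simp add: sympf_explicit sum_subtractf mult.commute)

lemma sympf_add_left: "sympf (x + x') y = sympf x y + sympf x' y"
  by (simp add: sympf_def dotp_def algebra_simps sum.distrib)

lemma sympf_add_right: "sympf x (y + y') = sympf x y + sympf x y'"
  by (simp add: sympf_def dotp_def vector_matrix_left_distrib algebra_simps sum.distrib)

lemma sympf_scale_left: "sympf (c *s x) y = c * sympf x y"
  by (simp add: sympf_def dotp_def sum_distrib_left mult_ac)

lemma sympf_scale_right: "sympf x (c *s y) = c * (sympf x y :: 'a::field)"
  by (simp add: sympf_def dotp_def scalar_vector_matrix_assoc sum_distrib_left mult_ac)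

lemma sympf_surj: "\<exists>x y. sympf x y = (t :: 'a::comm_ring_1)"
proof (intro exI)
  show "sympf (axis (Inr (undefined :: 'n::finite)) t) (axis (Inl undefined) 1) = t"
    by (simp add: sympf_explicit axis_def if_distrib[of "\<lambda>z. z * _"] cong: if_cong)
qed

lemma sympf_Asym_swap:
  assumes "u \<in> Asym"
  shows "sympf (y v* u) x = - sympf (x v* u) y"
proof -
  have "sympf (y v* u) x = sympf y (x v* u)"
    using sympf_tilde[of y u x] assms by (simp add: Asym_def)
  then show ?thesis by (simp add: sympf_swap[of y])
qed

lemma sympf_Asym_self:
  assumes "u \<in> Asym" and "(2::'a::field) \<noteq> 0"
  shows "sympf (x v* u) x = (0 :: 'a)"
  using sympf_Asym_swap[OF assms(1), of x x] assms(2) by (simp add: eq_neg_iff_add_eq_0 mult_2[symmetric])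

definition mat2_action :: "'a::comm_ring_1^2^2 \<Rightarrow> ('a, 'n::finite) modM \<Rightarrow> ('a, 'n) modM" where
  "mat2_action g m = (g$1$1 *s fst m + g$1$2 *s snd m, g$2$1 *s fst m + g$2$2 *s snd m)"

lemma mat2_action_mult: "mat2_action g \<circ> mat2_action h = mat2_action (g ** h)"
  by (rule ext) (simp add: mat2_action_def matrix_matrix_mult_def sum_2 vec_eq_iff algebra_simps)

lemma mat2_action_mat1: "mat2_action (mat 1) = id"
  by (rule ext) (simp add: mat2_action_def mat_def)

lemma bij_mat2_action:
  assumes "invertible g"
  shows "bij (mat2_action g)"
proof -
  obtain h where "g ** h = mat 1" "h ** g = mat 1"
    using assms by (auto simp: invertible_def)
  then show ?thesis
    by (intro o_bij[of "mat2_action h"]) (simp_all add: mat2_action_mult mat2_action_mat1)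
qed

lemma A_linear_aut_mat2_action:
  fixes g :: "'a::field^2^2"
  assumes "invertible g"
  shows "A_linear_aut (mat2_action g :: ('a, 'n::finite) modM \<Rightarrow> _)"
  using bij_mat2_action[OF assms]
  by (simp add: A_linear_aut_def mat2_action_def addM_def actM_def algebra_simps
      vector_add_ldistrib vector_matrix_left_distrib scalar_vector_matrix_assoc)

definition pair_form :: "('a::comm_ring_1, 'n::finite) modM \<Rightarrow> ('a, 'n) modM \<Rightarrow> 'a" where
  "pair_form m m' = sympf (fst m) (snd m') - sympf (snd m) (fst m')"

lemma chiM_eq_pair_form: "chiM psi m m' = psi (pair_form m m')"
  by (simp add: chiM_def pair_form_def)

lemma pair_form_mat2_action:
  "pair_form (mat2_action g m) (mat2_action g m') = det g * (pair_form m m' :: 'a::field)"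
  by (simp add: pair_form_def mat2_action_def det_2 sympf_add_left sympf_add_right
      sympf_scale_left sympf_scale_right algebra_simps)

lemma sympf_Asym_mat2_action:
  fixes g :: "'a::field^2^2" and m :: "('a, 'n::finite) modM"
  assumes "u \<in> Asym" and "(2::'a) \<noteq> 0"
  shows "sympf (fst (mat2_action g m) v* u) (snd (mat2_action g m)) = det g * sympf (fst m v* u) (snd m)"
  using sympf_Asym_self[OF assms, of "fst m"] sympf_Asym_self[OF assms, of "snd m"]
    sympf_Asym_swap[OF assms(1), of "snd m" "fst m"]
  by (simp add: mat2_action_def det_2 vector_matrix_left_distrib scalar_vector_matrix_assoc
      sympf_add_left sympf_add_right sympf_scale_left sympf_scale_right algebra_simps)

lemma mat2_action_in_U_set:
  fixes g :: "'a::field^2^2"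
  assumes "(2::'a) \<noteq> 0" and "det g = 1"
  shows "(mat2_action g :: ('a, 'n::finite) modM \<Rightarrow> _) \<in> U_set psi"
  using A_linear_aut_mat2_action[of g] assms
  by (simp add: U_set_def gammaM_def chiM_eq_pair_form invertible_det_nz sympf_Asym_mat2_action
      pair_form_mat2_action)

definition row_matrix :: "'m \<Rightarrow> 'a::zero^'l \<Rightarrow> 'a^'l^'m" where
  "row_matrix i x = (\<chi> j k. if j = i then x $ k else 0)"

lemma vector_row_matrix: "v v* row_matrix i x = v $ i *s (x :: 'a::comm_ring_1^'l::finite)"
  by (simp add: vec_eq_iff vector_matrix_mult_def row_matrix_def if_distrib[of "\<lambda>z. _ * z"] cong: if_cong)

lemma actM_row_matrix: "actM m (row_matrix i x) = (fst m $ i *s x, snd m $ i *s x)"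
  by (simp add: actM_def vector_row_matrix)

definition coeff_mat :: "(('a::comm_ring_1, 'n::finite) modM \<Rightarrow> ('a, 'n) modM) \<Rightarrow> 'a^2^2" where
  "coeff_mat \<beta> = (\<chi> i j. (if i = 1 then fst else snd)
      (\<beta> (if j = 1 then (axis (Inl undefined) 1, 0) else (0, axis (Inl undefined) 1))) $ Inl undefined)"

lemma coeff_mat_mat2_action: "coeff_mat (mat2_action g :: ('a::comm_ring_1, 'n::finite) modM \<Rightarrow> _) = g"
  by (simp add: coeff_mat_def mat2_action_def vec_eq_iff forall_2)

lemma A_linear_eq_mat2_action:
  fixes \<beta> :: "('a::field, 'n::finite) modM \<Rightarrow> ('a, 'n) modM"
  assumes add: "\<And>m m'. \<beta> (addM m m') = addM (\<beta> m) (\<beta> m')"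
    and act: "\<And>m a. \<beta> (actM m a) = actM (\<beta> m) a"
  shows "\<beta> = mat2_action (coeff_mat \<beta>)"
proof
  fix m :: "('a, 'n) modM"
  define i and e :: "'a^('n + 'n)" where "i = Inl undefined" and "e = axis i 1"
  define c where "c = coeff_mat \<beta>"
  have "e $ i = 1"
    by (simp add: e_def)
  have fixed_by_projection: "\<beta> p = (fst (\<beta> p) $ i *s e, snd (\<beta> p) $ i *s e)"
    if "actM p (row_matrix i e) = p" for p
    using act[of p "row_matrix i e"] that by (simp add: actM_row_matrix)
  have beta_e0: "\<beta> (e, 0) = (c$1$1 *s e, c$2$1 *s e)"
    using fixed_by_projection[of "(e, 0)"] by (simp add: actM_row_matrix c_def coeff_mat_def e_def i_def)
  have beta_0e: "\<beta> (0, e) = (c$1$2 *s e, c$2$2 *s e)"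
    using fixed_by_projection[of "(0, e)"] by (simp add: actM_row_matrix c_def coeff_mat_def e_def i_def)
  \<comment> \<open>\<open>(x, y) = (e, 0) R\<^sub>x + (0, e) R\<^sub>y\<close>, with \<open>R\<^sub>x\<close> the matrix whose row \<open>i\<close> is \<open>x\<close>\<close>
  have "m = addM (actM (e, 0) (row_matrix i (fst m))) (actM (0, e) (row_matrix i (snd m)))"
    by (simp add: addM_def actM_row_matrix \<open>e $ i = 1\<close>)
  then have "\<beta> m = addM (actM (\<beta> (e, 0)) (row_matrix i (fst m))) (actM (\<beta> (0, e)) (row_matrix i (snd m)))"
    by (metis add act)
  also have "\<dots> = mat2_action c m"
    using beta_e0 beta_0e by (simp add: addM_def actM_row_matrix mat2_action_def \<open>e $ i = 1\<close>)
  finally show "\<beta> m = mat2_action c m" .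
qed

lemma additive_character_dilation_invariant:
  fixes psi :: "'a::field \<Rightarrow> complex"
  assumes "additive_character psi" and "psi a \<noteq> 1" and "\<And>t. psi (c * t) = psi t"
  shows "c = 1"
proof (rule ccontr)
  assume "c \<noteq> 1"
  define t where "t = a / (c - 1)"
  have "c * t = t + a"
    using \<open>c \<noteq> 1\<close> by (simp add: t_def field_simps)
  then have "psi t = psi t * psi a"
    using assms(1) assms(3)[of t] by (simp add: additive_character_def)
  moreover have "psi t \<noteq> 0"
    using assms(1) by (metis additive_character_def norm_zero zero_neq_one)
  ultimately show False
    using assms(2) by simp
qed

lemma det_eq_1_if_chiM_invariant:
  fixes psi :: "'a::field \<Rightarrow> complex" and g :: "'a^2^2"
  assumes "additive_character psi" and "psi a \<noteq> 1"
    and inv: "\<And>m m'. chiM psi (mat2_action g m :: ('a, 'n::finite) modM) (mat2_action g m') = chiM psi m m'"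
  shows "det g = 1"
proof (rule additive_character_dilation_invariant[OF assms(1,2)])
  fix t
  obtain x y :: "'a^('n + 'n)" where xy: "sympf x y = t"
    using sympf_surj by blast
  have "pair_form (x, 0) (0, y) = sympf x y"
    by (simp add: pair_form_def sympf_explicit)
  then have "pair_form (x, 0) (0, y) = t"
    using xy by simp
  then show "psi (det g * t) = psi t"
    using inv[of "(x, 0)" "(0, y)"] by (simp add: chiM_eq_pair_form pair_form_mat2_action)
qed

lemma U_set_eq_mat2_action_image:
  fixes psi :: "'a::field \<Rightarrow> complex"
  assumes "(2::'a) \<noteq> 0" and "additive_character psi" and "psi a \<noteq> 1"
  shows "(U_set psi :: (('a, 'n::finite) modM \<Rightarrow> _) set) = mat2_action ` {g. det g = 1}"
proof (intro subset_antisym subsetI)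
  fix \<beta> :: "('a, 'n) modM \<Rightarrow> _"
  assume \<beta>: "\<beta> \<in> U_set psi"
  then have "\<beta> = mat2_action (coeff_mat \<beta>)"
    by (intro A_linear_eq_mat2_action) (auto simp: U_set_def A_linear_aut_def)
  moreover have "det (coeff_mat \<beta>) = 1"
    using \<beta> calculation assms(2,3)
    by (intro det_eq_1_if_chiM_invariant[where 'n = 'n]) (auto simp: U_set_def)
  ultimately show "\<beta> \<in> mat2_action ` {g. det g = 1}"
    by blast
qed (use mat2_action_in_U_set[OF assms(1)] in blast)

lemma two_neq_zero_if_odd_card:
  assumes "odd CARD('a::{field,finite})"
  shows "(2::'a) \<noteq> 0"
proof
  assume "(2::'a) = 0"
  then have "CHAR('a) dvd 2"
    using of_nat_eq_0_iff_char_dvd[where 'a = 'a, of 2] by simp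
  moreover have "odd CHAR('a)"
    using assms CHAR_dvd_CARD dvd_trans by blast
  ultimately have "CHAR('a) = 1"
    by (metis dvd_antisym dvd_refl nat_dvd_1_iff_1 odd_one prime_nat_iff two_is_prime_nat)
  then show False
    by simp
qed

theorem mainTheorem7:
  fixes psi :: "'k::{field,finite} \<Rightarrow> complex"
  assumes "odd CARD('k)" and "CARD('k) > 3"
    and "additive_character psi" and "\<exists>a. psi a \<noteq> 1"
  shows "(U_group psi :: (('k, 'n::finite) modM \<Rightarrow> ('k, 'n) modM) monoid) \<cong> (SL2_group :: ('k^2^2) monoid)"
proof -
  obtain a where "psi a \<noteq> 1"
    using assms(4) by blast
  then have U: "(U_set psi :: (('k, 'n) modM \<Rightarrow> _) set) = mat2_action ` {g. det g = 1}"
    using U_set_eq_mat2_action_image two_neq_zero_if_odd_card assms(1,3) by blast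
  have "coeff_mat \<in> iso (U_group psi :: (('k, 'n) modM \<Rightarrow> _) monoid) SL2_group"
  proof (unfold iso_iff, intro conjI)
    show "coeff_mat \<in> hom (U_group psi :: (('k, 'n) modM \<Rightarrow> _) monoid) SL2_group"
      by (auto simp: hom_def U_group_def SL2_group_def U coeff_mat_mat2_action mat2_action_mult)
    show "coeff_mat ` carrier (U_group psi :: (('k, 'n) modM \<Rightarrow> _) monoid) = carrier SL2_group"
      by (simp add: U_group_def SL2_group_def U image_image coeff_mat_mat2_action)
    show "inj_on coeff_mat (carrier (U_group psi :: (('k, 'n) modM \<Rightarrow> _) monoid))"
      by (auto simp: U_group_def U inj_on_def coeff_mat_mat2_action)
  qed
  then show ?thesis
    by (rule is_isoI)
qed

end
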